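(* Let $\rho\in(0,1)$ and $\xi\in\mathbb{R}$, and on $(x,y)\in(0,\pi)\times\mathbb{R}$ with conjugate momenta $(P_x,P_y)$ consider the Hamiltonian $$H=\frac{1}{2(1-\rho\cos x)}\Big(\sin^2 x\,(P_x^2+P_y^2)+\xi\Big)$$ (associated with the metric $g=(1-\rho\cos x)\,\frac{dx^2+dy^2}{\sin^2 x}$ and the potential $\frac{\xi}{2(1-\rho\cos x)}$), together with the quadratic functions $$S_+=e^{y}\big(\sin x\,P_xP_y+\cos x\,P_y^2-\rho H\big),\qquad S_-=e^{-y}\big(-\sin x\,P_xP_y+\cos x\,P_y^2-\rho H\big).$$ Then the superintegrable systems $\{H,P_y,S_+\}$ and $\{H,P_y,S_-\}$ (the metric $g$, and the functions $H,P_y,S_+,S_-$) are globally defined on a manifold $M$ diffeomorphic to the hyperbolic plane $\mathbb{H}^2$.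
   Context: The hyperbolic plane $\mathbb{H}^2$ is the sheet $x_1^2+x_2^2-x_3^2=-1$, $x_3\ge 1$ of the hyperboloid in $\mathbb{R}^3$ with the metric induced by $dx_1^2+dx_2^2-dx_3^2$. *)

theory Defs
  imports "HOL-Analysis.Analysis"
begin

fun iter_pderiv :: "'a::euclidean_space list \<Rightarrow> ('a \<Rightarrow> real) \<Rightarrow> 'a \<Rightarrow> real" where
  "iter_pderiv [] f = f"
| "iter_pderiv (d # ds) f = (\<lambda>x. frechet_derivative (iter_pderiv ds f) (at x) d)"

definition smooth_on :: "'a::euclidean_space set \<Rightarrow> ('a \<Rightarrow> real) \<Rightarrow> bool" where
  "smooth_on S f \<longleftrightarrow> open S \<and>
     (\<forall>ds. set ds \<subseteq> Basis \<longrightarrow> (\<forall>x\<in>S. iter_pderiv ds f differentiable (at x)))"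

definition smooth_map_on :: "'a::euclidean_space set \<Rightarrow> ('a \<Rightarrow> 'b::euclidean_space) \<Rightarrow> bool" where
  "smooth_map_on S f \<longleftrightarrow> (\<forall>b\<in>Basis. smooth_on S (\<lambda>x. f x \<bullet> b))"

definition hyperbolic_plane :: "(real \<times> real \<times> real) set" where
  "hyperbolic_plane = {(x1, x2, x3). x1\<^sup>2 + x2\<^sup>2 - x3\<^sup>2 = -1 \<and> x3 \<ge> 1}"

definition diffeomorphic_to_submanifold ::
  "'a::euclidean_space set \<Rightarrow> 'b::euclidean_space set \<Rightarrow> bool" where
  "diffeomorphic_to_submanifold S N \<longleftrightarrow>
     (\<exists>f g W. open W \<and> N \<subseteq> W \<and> smooth_map_on S f \<and> smooth_map_on W g \<and>
        f ` S = N \<and> (\<forall>p\<in>S. g (f p) = p) \<and> (\<forall>q\<in>N. f (g q) = q))"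

definition strip :: "(real \<times> real) set" where
  "strip = {0<..<pi} \<times> UNIV"

text \<open>Conformal factor of g = (1 - rho cos x)(dx^2+dy^2)/sin^2 x.\<close>
definition metric_coeff :: "real \<Rightarrow> real \<times> real \<Rightarrow> real" where
  "metric_coeff \<rho> p = (1 - \<rho> * cos (fst p)) / (sin (fst p))\<^sup>2"

text \<open>Phase-space functions on T*strip, points ((x,y),(Px,Py)).\<close>
definition Ham :: "real \<Rightarrow> real \<Rightarrow> (real \<times> real) \<times> (real \<times> real) \<Rightarrow> real" where
  "Ham \<rho> \<xi> z = (case z of ((x, y), (px, py)) \<Rightarrow>
      ((sin x)\<^sup>2 * (px\<^sup>2 + py\<^sup>2) + \<xi>) / (2 * (1 - \<rho> * cos x)))"

definition Py :: "(real \<times> real) \<times> (real \<times> real) \<Rightarrow> real" where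
  "Py z = snd (snd z)"

definition S_plus :: "real \<Rightarrow> real \<Rightarrow> (real \<times> real) \<times> (real \<times> real) \<Rightarrow> real" where
  "S_plus \<rho> \<xi> z = (case z of ((x, y), (px, py)) \<Rightarrow>
      exp y * (sin x * px * py + cos x * py\<^sup>2 - \<rho> * Ham \<rho> \<xi> z))"

definition S_minus :: "real \<Rightarrow> real \<Rightarrow> (real \<times> real) \<times> (real \<times> real) \<Rightarrow> real" where
  "S_minus \<rho> \<xi> z = (case z of ((x, y), (px, py)) \<Rightarrow>
      exp (- y) * (- sin x * px * py + cos x * py\<^sup>2 - \<rho> * Ham \<rho> \<xi> z))"

end

theory Submission
  imports Defs
begin

text \<open>All the functions involved are elementary: built from linear maps and constants by sums,
  products, quotients with non-vanishing denominator and composition with sin, cos, exp, arctan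
  and sqrt (of a positive function). The partial derivatives of an elementary function are again
  elementary, so elementary functions are \<open>C\<^sup>\<infinity>\<close>. On the strip \<open>sin x > 0\<close>, and
  \<open>1 - \<rho> cos x > 0\<close> whenever \<open>\<bar>\<rho>\<bar> < 1\<close>, so the metric and the phase-space functions are
  elementary there. The strip is identified with the hyperboloid by
  \<open>(x, y) \<mapsto> (- cot x, y, sqrt (1 + cot\<^sup>2 x + y\<^sup>2))\<close>, whose inverse
  \<open>(q\<^sub>1, q\<^sub>2, q\<^sub>3) \<mapsto> (\<pi>/2 + arctan q\<^sub>1, q\<^sub>2)\<close> extends elementarily to all of \<open>\<real>\<^sup>3\<close>.\<close>

text \<open>The side conditions of \<open>inverse\<close> and \<open>sqrt\<close> are only imposed on \<open>S\<close>, so membership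
  controls derivatives at points of \<open>S\<close> only.\<close>
inductive_set elementary_on :: "'a::real_normed_vector set \<Rightarrow> ('a \<Rightarrow> real) set" for S where
  elementary_const: "(\<lambda>x. c) \<in> elementary_on S"
| elementary_linear: "bounded_linear L \<Longrightarrow> L \<in> elementary_on S"
| elementary_add: "f \<in> elementary_on S \<Longrightarrow> g \<in> elementary_on S \<Longrightarrow> (\<lambda>x. f x + g x) \<in> elementary_on S"
| elementary_mult: "f \<in> elementary_on S \<Longrightarrow> g \<in> elementary_on S \<Longrightarrow> (\<lambda>x. f x * g x) \<in> elementary_on S"
| elementary_inverse: "f \<in> elementary_on S \<Longrightarrow> (\<forall>x\<in>S. f x \<noteq> 0) \<Longrightarrow> (\<lambda>x. inverse (f x)) \<in> elementary_on S"
| elementary_sin: "f \<in> elementary_on S \<Longrightarrow> (\<lambda>x. sin (f x)) \<in> elementary_on S"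
| elementary_cos: "f \<in> elementary_on S \<Longrightarrow> (\<lambda>x. cos (f x)) \<in> elementary_on S"
| elementary_exp: "f \<in> elementary_on S \<Longrightarrow> (\<lambda>x. exp (f x)) \<in> elementary_on S"
| elementary_arctan: "f \<in> elementary_on S \<Longrightarrow> (\<lambda>x. arctan (f x)) \<in> elementary_on S"
| elementary_sqrt: "f \<in> elementary_on S \<Longrightarrow> (\<forall>x\<in>S. f x > 0) \<Longrightarrow> (\<lambda>x. sqrt (f x)) \<in> elementary_on S"

lemma elementary_minus: "f \<in> elementary_on S \<Longrightarrow> (\<lambda>x. - f x) \<in> elementary_on S"
  using elementary_mult[OF elementary_const[where c="-1"], of f] by simp

lemma elementary_diff:
  "f \<in> elementary_on S \<Longrightarrow> g \<in> elementary_on S \<Longrightarrow> (\<lambda>x. f x - g x) \<in> elementary_on S"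
  using elementary_add[OF _ elementary_minus[of g]] by simp

lemma elementary_divide:
  "f \<in> elementary_on S \<Longrightarrow> g \<in> elementary_on S \<Longrightarrow> \<forall>x\<in>S. g x \<noteq> 0 \<Longrightarrow>
    (\<lambda>x. f x / g x) \<in> elementary_on S"
  using elementary_mult[OF _ elementary_inverse[of g]] by (simp add: divide_inverse)

lemma elementary_power2: "f \<in> elementary_on S \<Longrightarrow> (\<lambda>x. (f x)\<^sup>2) \<in> elementary_on S"
  using elementary_mult[of f S f] by (simp add: power2_eq_square)

definition has_elementary_derivative_on :: "'a::real_normed_vector set \<Rightarrow> ('a \<Rightarrow> real) \<Rightarrow> bool" where
  "has_elementary_derivative_on S f \<longleftrightarrow>
     (\<exists>D. (\<forall>d. D d \<in> elementary_on S) \<and> (\<forall>x\<in>S. (f has_derivative (\<lambda>d. D d x)) (at x)))"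

lemma has_elementary_derivative_on_add:
  assumes "has_elementary_derivative_on S f" "has_elementary_derivative_on S g"
  shows "has_elementary_derivative_on S (\<lambda>x. f x + g x)"
proof -
  obtain Df Dg where "\<forall>d. Df d \<in> elementary_on S" "\<forall>x\<in>S. (f has_derivative (\<lambda>d. Df d x)) (at x)"
    "\<forall>d. Dg d \<in> elementary_on S" "\<forall>x\<in>S. (g has_derivative (\<lambda>d. Dg d x)) (at x)"
    using assms unfolding has_elementary_derivative_on_def by blast
  then show ?thesis unfolding has_elementary_derivative_on_def
    by (intro exI[of _ "\<lambda>d x. Df d x + Dg d x"]) (auto intro: elementary_add has_derivative_add)
qed

lemma has_elementary_derivative_on_mult:
  assumes f: "f \<in> elementary_on S" and g: "g \<in> elementary_on S"
    and "has_elementary_derivative_on S f" "has_elementary_derivative_on S g"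
  shows "has_elementary_derivative_on S (\<lambda>x. f x * g x)"
proof -
  obtain Df Dg where Df: "\<forall>d. Df d \<in> elementary_on S" "\<forall>x\<in>S. (f has_derivative (\<lambda>d. Df d x)) (at x)"
    and Dg: "\<forall>d. Dg d \<in> elementary_on S" "\<forall>x\<in>S. (g has_derivative (\<lambda>d. Dg d x)) (at x)"
    using assms(3,4) unfolding has_elementary_derivative_on_def by blast
  have "(\<lambda>x. f x * Dg d x + Df d x * g x) \<in> elementary_on S" for d
    using Df(1) Dg(1) by (intro elementary_add elementary_mult f g) auto
  with Df(2) Dg(2) show ?thesis unfolding has_elementary_derivative_on_def
    by (intro exI[of _ "\<lambda>d x. f x * Dg d x + Df d x * g x"]) (auto intro: has_derivative_mult)
qed

lemma has_elementary_derivative_on_compose: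
  assumes "has_elementary_derivative_on S f"
    and "\<phi>' \<in> elementary_on S" "\<forall>x\<in>S. (\<phi> has_real_derivative \<phi>' x) (at (f x))"
  shows "has_elementary_derivative_on S (\<lambda>x. \<phi> (f x))"
proof -
  obtain Df where "\<forall>d. Df d \<in> elementary_on S" "\<forall>x\<in>S. (f has_derivative (\<lambda>d. Df d x)) (at x)"
    using assms(1) unfolding has_elementary_derivative_on_def by blast
  with assms(2,3) show ?thesis unfolding has_elementary_derivative_on_def
    by (intro exI[of _ "\<lambda>d x. Df d x * \<phi>' x"]) (auto intro: elementary_mult DERIV_compose_FDERIV)
qed

lemma elementary_has_elementary_derivative:
  "f \<in> elementary_on S \<Longrightarrow> has_elementary_derivative_on S f"
proof (induction rule: elementary_on.induct)
  case (elementary_const c)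
  show ?case unfolding has_elementary_derivative_on_def
    by (intro exI[of _ "\<lambda>d x. 0"]) (auto intro: elementary_on.intros)
next
  case (elementary_linear L)
  then show ?case unfolding has_elementary_derivative_on_def
    by (intro exI[of _ "\<lambda>d x. L d"])
      (auto intro: elementary_on.intros bounded_linear_imp_has_derivative)
next
  case (elementary_add f g)
  show ?case by (rule has_elementary_derivative_on_add[OF elementary_add.IH])
next
  case (elementary_mult f g)
  then show ?case by (rule has_elementary_derivative_on_mult)
next
  case (elementary_inverse f)
  have "(\<lambda>x. - (inverse (f x))\<^sup>2) \<in> elementary_on S"
    using elementary_inverse.hyps
    by (intro elementary_minus elementary_power2 elementary_on.elementary_inverse)
  moreover have "\<forall>x\<in>S. (inverse has_real_derivative - (inverse (f x))\<^sup>2) (at (f x))"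
    using elementary_inverse.hyps(2) DERIV_inverse[of "f _" UNIV] by (simp add: power2_eq_square)
  ultimately show ?case
    by (rule has_elementary_derivative_on_compose[OF elementary_inverse.IH])
next
  case (elementary_sin f)
  show ?case
    by (rule has_elementary_derivative_on_compose[OF elementary_sin.IH
          elementary_on.elementary_cos[OF elementary_sin.hyps]]) simp
next
  case (elementary_cos f)
  show ?case
    by (rule has_elementary_derivative_on_compose[OF elementary_cos.IH
          elementary_minus[OF elementary_on.elementary_sin[OF elementary_cos.hyps]]]) simp
next
  case (elementary_exp f)
  show ?case
    by (rule has_elementary_derivative_on_compose[OF elementary_exp.IH
          elementary_on.elementary_exp[OF elementary_exp.hyps]]) simp
next
  case (elementary_arctan f)
  have "(\<lambda>x. inverse (1 + (f x)\<^sup>2)) \<in> elementary_on S"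
    using elementary_arctan.hyps
    by (intro elementary_on.elementary_inverse elementary_on.elementary_add
        elementary_on.elementary_const elementary_power2) (auto simp: add_nonneg_eq_0_iff)
  then show ?case
    by (rule has_elementary_derivative_on_compose[OF elementary_arctan.IH]) (simp add: DERIV_arctan)
next
  case (elementary_sqrt f)
  have "(\<lambda>x. inverse (sqrt (f x)) / 2) \<in> elementary_on S"
    using elementary_sqrt.hyps
    by (intro elementary_divide elementary_on.elementary_inverse elementary_on.elementary_sqrt
        elementary_on.elementary_const) auto
  then show ?case
    by (rule has_elementary_derivative_on_compose[OF elementary_sqrt.IH])
      (simp add: elementary_sqrt.hyps(2) DERIV_real_sqrt)
qed

lemma has_elementary_derivative_on_transform:
  assumes "open S" "\<forall>x\<in>S. f x = g x" "has_elementary_derivative_on S g"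
  shows "has_elementary_derivative_on S f"
proof -
  obtain D where D: "\<forall>d. D d \<in> elementary_on S" "\<forall>x\<in>S. (g has_derivative (\<lambda>d. D d x)) (at x)"
    using assms(3) unfolding has_elementary_derivative_on_def by blast
  have "(f has_derivative (\<lambda>d. D d x)) (at x)" if "x \<in> S" for x
    using has_derivative_transform_within_open[OF D(2)[rule_format, OF that] assms(1) that] assms(2)
    by metis
  with D(1) show ?thesis unfolding has_elementary_derivative_on_def by blast
qed

lemma iter_pderiv_elementary:
  fixes f :: "'a::euclidean_space \<Rightarrow> real"
  assumes "open S" "f \<in> elementary_on S"
  shows "\<exists>g\<in>elementary_on S. \<forall>x\<in>S. iter_pderiv ds f x = g x"
proof (induction ds)
  case Nil
  then show ?case using assms(2) by auto
next
  case (Cons d ds)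
  then obtain g where g: "g \<in> elementary_on S" "\<forall>x\<in>S. iter_pderiv ds f x = g x" by blast
  have "has_elementary_derivative_on S (iter_pderiv ds f)"
    using has_elementary_derivative_on_transform[OF assms(1) g(2) elementary_has_elementary_derivative[OF g(1)]] .
  then obtain D where D: "\<forall>d. D d \<in> elementary_on S"
      "\<forall>x\<in>S. (iter_pderiv ds f has_derivative (\<lambda>d. D d x)) (at x)"
    unfolding has_elementary_derivative_on_def by blast
  have "iter_pderiv (d # ds) f x = D d x" if "x \<in> S" for x
    using frechet_derivative_at[OF D(2)[rule_format, OF that], symmetric] by simp
  with D(1) show ?case by blast
qed

lemma smooth_on_elementary:
  fixes f :: "'a::euclidean_space \<Rightarrow> real"
  assumes "open S" "f \<in> elementary_on S"
  shows "smooth_on S f"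
  unfolding smooth_on_def
proof (intro conjI assms allI impI ballI)
  fix ds :: "'a list" and x assume "x \<in> S"
  obtain g where g: "g \<in> elementary_on S" "\<forall>x\<in>S. iter_pderiv ds f x = g x"
    using iter_pderiv_elementary[OF assms] by blast
  have "has_elementary_derivative_on S (iter_pderiv ds f)"
    using has_elementary_derivative_on_transform[OF assms(1) g(2) elementary_has_elementary_derivative[OF g(1)]] .
  then obtain D where "(iter_pderiv ds f has_derivative (\<lambda>d. D d x)) (at x)"
    using \<open>x \<in> S\<close> unfolding has_elementary_derivative_on_def by blast
  then show "iter_pderiv ds f differentiable at x" unfolding differentiable_def by blast
qed

lemma elementary_inner_real:
  "f \<in> elementary_on S \<Longrightarrow> (\<lambda>x. f x \<bullet> c) \<in> elementary_on S"
  using elementary_mult[OF _ elementary_const[of c]] by simp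

lemma elementary_inner_Pair:
  assumes "f \<in> elementary_on S" "(\<lambda>x. g x \<bullet> d) \<in> elementary_on S"
  shows "(\<lambda>x. (f x, g x) \<bullet> (c, d)) \<in> elementary_on S"
  using elementary_add[OF elementary_inner_real[OF assms(1), of c] assms(2)] by simp

lemma smooth_map_on_elementary:
  assumes "open S" "\<forall>b. (\<lambda>x. f x \<bullet> b) \<in> elementary_on S"
  shows "smooth_map_on S f"
  using assms unfolding smooth_map_on_def by (auto intro: smooth_on_elementary)

lemma elementary_fst: "bounded_linear g \<Longrightarrow> (\<lambda>x. fst (g x)) \<in> elementary_on S"
  by (intro elementary_linear bounded_linear_fst_comp)

lemma elementary_snd: "bounded_linear g \<Longrightarrow> (\<lambda>x. snd (g x)) \<in> elementary_on S"
  by (intro elementary_linear bounded_linear_snd_comp)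

lemmas elementary_intros =
  elementary_const elementary_add elementary_mult elementary_inverse elementary_sin elementary_cos
  elementary_exp elementary_arctan elementary_sqrt elementary_minus elementary_diff elementary_divide
  elementary_power2 elementary_inner_real elementary_inner_Pair elementary_fst elementary_snd
  bounded_linear_ident bounded_linear_fst bounded_linear_snd

lemma one_minus_mult_cos_pos:
  fixes \<rho> x :: real
  assumes "\<bar>\<rho>\<bar> < 1" shows "0 < 1 - \<rho> * cos x"
proof -
  have "\<rho> * cos x \<le> \<bar>\<rho>\<bar> * \<bar>cos x\<bar>" by (simp add: abs_mult[symmetric])
  also have "\<dots> \<le> \<bar>\<rho>\<bar>" by (rule mult_left_le) simp_all
  finally show ?thesis using assms by linarith
qed

lemma open_strip: "open strip"
  unfolding strip_def by (intro open_Times) auto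

lemma sin_pos_on_strip: "p \<in> strip \<Longrightarrow> 0 < sin (fst p)"
  unfolding strip_def by (auto intro: sin_gt_zero)

lemma pi_half_plus_arctan_neg_cot: "0 < x \<Longrightarrow> x < pi \<Longrightarrow> pi/2 + arctan (- cot x) = x"
  using arctan_tan[of "x - pi/2"] by (simp add: cot_def tan_def sin_diff cos_diff)

lemma cot_pi_half_plus_arctan: "cot (pi/2 + arctan t) = - t"
  using tan_arctan[of t] by (simp add: cot_def tan_def sin_add cos_add)

lemma hyperbolic_plane_iff: "(q1, q2, q3) \<in> hyperbolic_plane \<longleftrightarrow> q3 = sqrt (1 + q1\<^sup>2 + q2\<^sup>2)"
proof
  assume "(q1, q2, q3) \<in> hyperbolic_plane"
  then show "q3 = sqrt (1 + q1\<^sup>2 + q2\<^sup>2)"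
    unfolding hyperbolic_plane_def by (intro real_sqrt_unique[symmetric]) auto
next
  assume q3: "q3 = sqrt (1 + q1\<^sup>2 + q2\<^sup>2)"
  have "1 \<le> q3" unfolding q3 by (rule real_le_rsqrt) simp
  moreover have "q3\<^sup>2 = 1 + q1\<^sup>2 + q2\<^sup>2" unfolding q3 by (intro real_sqrt_pow2) simp
  ultimately show "(q1, q2, q3) \<in> hyperbolic_plane" unfolding hyperbolic_plane_def by simp
qed

definition strip_to_hyperboloid :: "real \<times> real \<Rightarrow> real \<times> real \<times> real" where
  "strip_to_hyperboloid p = (- cot (fst p), snd p, sqrt (1 + (cot (fst p))\<^sup>2 + (snd p)\<^sup>2))"

definition hyperboloid_to_strip :: "real \<times> real \<times> real \<Rightarrow> real \<times> real" where
  "hyperboloid_to_strip q = (pi/2 + arctan (fst q), fst (snd q))"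

lemma hyperboloid_to_strip_in_strip: "hyperboloid_to_strip q \<in> strip"
  using arctan_bounded[of "fst q"] by (simp add: hyperboloid_to_strip_def strip_def)

lemma elementary_cot_on_strip: "(\<lambda>p. cot (fst p)) \<in> elementary_on strip"
  unfolding cot_def by (intro elementary_intros) (auto dest: sin_pos_on_strip)

lemma smooth_map_on_strip_to_hyperboloid: "smooth_map_on strip strip_to_hyperboloid"
proof (intro smooth_map_on_elementary open_strip allI)
  fix b :: "real \<times> real \<times> real"
  obtain b1 b2 b3 where b: "b = (b1, b2, b3)" by (cases b)
  show "(\<lambda>p. strip_to_hyperboloid p \<bullet> b) \<in> elementary_on strip"
    unfolding strip_to_hyperboloid_def b
    by (intro elementary_intros elementary_cot_on_strip) (auto intro!: add_pos_nonneg)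
qed

lemma smooth_map_on_hyperboloid_to_strip: "smooth_map_on UNIV hyperboloid_to_strip"
proof (intro smooth_map_on_elementary open_UNIV allI)
  fix b :: "real \<times> real"
  obtain b1 b2 where b: "b = (b1, b2)" by (cases b)
  show "(\<lambda>q. hyperboloid_to_strip q \<bullet> b) \<in> elementary_on UNIV"
    unfolding hyperboloid_to_strip_def b by (intro elementary_intros)
qed

lemma diffeomorphic_strip_hyperbolic_plane: "diffeomorphic_to_submanifold strip hyperbolic_plane"
  unfolding diffeomorphic_to_submanifold_def
proof (intro exI[of _ strip_to_hyperboloid] exI[of _ hyperboloid_to_strip] exI[of _ UNIV] conjI
    smooth_map_on_strip_to_hyperboloid smooth_map_on_hyperboloid_to_strip open_UNIV subset_UNIV)
  have right_inverse: "strip_to_hyperboloid (hyperboloid_to_strip q) = q" if "q \<in> hyperbolic_plane" for q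
    using that by (cases q) (simp add: hyperbolic_plane_iff strip_to_hyperboloid_def
        hyperboloid_to_strip_def cot_pi_half_plus_arctan)
  then show "\<forall>q\<in>hyperbolic_plane. strip_to_hyperboloid (hyperboloid_to_strip q) = q" ..
  show "\<forall>p\<in>strip. hyperboloid_to_strip (strip_to_hyperboloid p) = p"
    by (auto simp: strip_def strip_to_hyperboloid_def hyperboloid_to_strip_def pi_half_plus_arctan_neg_cot)
  have "strip_to_hyperboloid ` strip \<subseteq> hyperbolic_plane"
    by (auto simp: strip_to_hyperboloid_def hyperbolic_plane_iff)
  moreover have "q \<in> strip_to_hyperboloid ` strip" if "q \<in> hyperbolic_plane" for q
    using hyperboloid_to_strip_in_strip right_inverse[OF that] by (metis image_eqI)
  ultimately show "strip_to_hyperboloid ` strip = hyperbolic_plane" by blast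
qed

lemma elementary_Ham:
  assumes "\<bar>\<rho>\<bar> < 1" shows "Ham \<rho> \<xi> \<in> elementary_on S"
  unfolding Ham_def[abs_def] prod.case_eq_if
  using one_minus_mult_cos_pos[OF assms] by (intro elementary_intros) (auto simp: less_le)

lemma elementary_S_plus:
  assumes "\<bar>\<rho>\<bar> < 1" shows "S_plus \<rho> \<xi> \<in> elementary_on S"
  unfolding S_plus_def[abs_def] prod.case_eq_if
  using elementary_Ham[OF assms] by (intro elementary_intros) auto

lemma elementary_S_minus:
  assumes "\<bar>\<rho>\<bar> < 1" shows "S_minus \<rho> \<xi> \<in> elementary_on S"
  unfolding S_minus_def[abs_def] prod.case_eq_if
  using elementary_Ham[OF assms] by (intro elementary_intros) auto

theorem proposition2:
  fixes \<rho> \<xi> :: real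
  assumes "0 < \<rho>" and "\<rho> < 1"
  shows "diffeomorphic_to_submanifold strip hyperbolic_plane
       \<and> smooth_on strip (metric_coeff \<rho>)
       \<and> (\<forall>p\<in>strip. metric_coeff \<rho> p > 0)
       \<and> smooth_on (strip \<times> UNIV) (Ham \<rho> \<xi>)
       \<and> smooth_on (strip \<times> UNIV) Py
       \<and> smooth_on (strip \<times> UNIV) (S_plus \<rho> \<xi>)
       \<and> smooth_on (strip \<times> UNIV) (S_minus \<rho> \<xi>)"
proof -
  have \<rho>: "\<bar>\<rho>\<bar> < 1" using assms by simp
  have phase_space: "open (strip \<times> UNIV :: ((real \<times> real) \<times> real \<times> real) set)"
    by (intro open_Times open_strip open_UNIV)
  have "metric_coeff \<rho> \<in> elementary_on strip"
    unfolding metric_coeff_def[abs_def]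
    by (intro elementary_intros) (auto dest: sin_pos_on_strip)
  moreover have "metric_coeff \<rho> p > 0" if "p \<in> strip" for p
    using sin_pos_on_strip[OF that] one_minus_mult_cos_pos[OF \<rho>]
    by (simp add: metric_coeff_def divide_pos_pos)
  moreover have "Py \<in> elementary_on S" for S
    unfolding Py_def[abs_def] by (intro elementary_intros)
  ultimately show ?thesis
    using elementary_Ham[OF \<rho>] elementary_S_plus[OF \<rho>] elementary_S_minus[OF \<rho>]
    by (simp add: diffeomorphic_strip_hyperbolic_plane smooth_on_elementary open_strip phase_space)
qed

end
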